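(* Let $x,y:\mathbb{Z}\to\mathbb{R}$ be the coordinates of the vertices of a polygon indexed by $u\in\mathbb{Z}$, and let $X+ih_1$ and $Y+ih_2$ be their discrete analytic extensions (as in the context). Write $h=(h_1,h_2)$. Then there exists $F:\mathbb{Z}^2\to\mathbb{R}$ such that for all $(u,v)\in\mathbb{Z}^2$ $$F(u+1,v)-F(u,v)=-\big[h(u+\tfrac12,v-\tfrac12),\,h(u+\tfrac12,v+\tfrac12)\big],$$ $$F(u,v+1)-F(u,v)=\big[h(u-\tfrac12,v+\tfrac12),\,h(u+\tfrac12,v+\tfrac12)\big].$$
   Context: $[X,Y]$ is the determinant of the $2\times2$ matrix with columns $X,Y$. Let $(\mathbb{Z}^2)^*=(\mathbb{Z}+\tfrac12)^2$ be the dual lattice. Functions $g:\mathbb{Z}^2\to\mathbb{R}$ and $k:(\mathbb{Z}^2)^*\to\mathbb{R}$ are complex conjugate (and $g+ik$ is called discrete analytic) if for all $(u,v)\in\mathbb{Z}^2$: $g(u+1,v)-g(u,v)=k(u+\tfrac12,v+\tfrac12)-k(u+\tfrac12,v-\tfrac12)$ and $g(u,v+1)-g(u,v)=-(k(u+\tfrac12,v+\tfrac12)-k(u-\tfrac12,v+\tfrac12))$ (discrete Cauchy–Riemann equations). The discrete analytic extension of $x$ is the unique discrete analytic $X+ih_1$ with $X(u,0)=x(u)$ and $h_1(u+\tfrac12,\tfrac12)=-h_1(u+\tfrac12,-\tfrac12)$ for all $u$; similarly $Y+ih_2$ extends $y$. *)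

theory Defs
  imports Main "HOL.Real"
begin

(* Convention: a function k on the dual lattice (Z+1/2)^2 is represented as
   kd :: int => int => real with  kd a b = k(a + 1/2, b + 1/2). *)

definition det2 :: "real \<times> real \<Rightarrow> real \<times> real \<Rightarrow> real" where
  "det2 P Q = fst P * snd Q - fst Q * snd P"

definition complex_conjugate :: "(int \<Rightarrow> int \<Rightarrow> real) \<Rightarrow> (int \<Rightarrow> int \<Rightarrow> real) \<Rightarrow> bool" where
  "complex_conjugate g k \<longleftrightarrow>
     (\<forall>u v. g (u + 1) v - g u v = k u v - k u (v - 1)
          \<and> g u (v + 1) - g u v = - (k u v - k (u - 1) v))"

definition discrete_analytic_extension ::
  "(int \<Rightarrow> real) \<Rightarrow> (int \<Rightarrow> int \<Rightarrow> real) \<Rightarrow> (int \<Rightarrow> int \<Rightarrow> real) \<Rightarrow> bool" where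
  "discrete_analytic_extension x G H \<longleftrightarrow>
     complex_conjugate G H \<and> (\<forall>u. G u 0 = x u) \<and> (\<forall>u. H u 0 = - H u (-1))"

end

theory Submission
  imports Defs
begin

text \<open>The Cauchy-Riemann equations make each h1, h2 discrete harmonic on the dual lattice.
  For harmonic h the 1-form with the two prescribed determinants as its u- and v-components
  is closed (its circulation around every unit square vanishes), and a closed 1-form on
  \<open>\<int>\<^sup>2\<close> is exact.\<close>

definition discrete_harmonic :: "(int \<Rightarrow> int \<Rightarrow> real) \<Rightarrow> bool" where
  "discrete_harmonic k \<longleftrightarrow>
     (\<forall>u v. k (u + 1) v + k (u - 1) v + k u (v + 1) + k u (v - 1) = 4 * k u v)"

lemma complex_conjugate_imp_discrete_harmonic:
  assumes "complex_conjugate g k"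
  shows "discrete_harmonic k"
  unfolding discrete_harmonic_def
proof (intro allI)
  fix u v
  \<comment> \<open>g cancels from the four Cauchy-Riemann equations around one unit square\<close>
  have "g (u + 1) v - g u v = k u v - k u (v - 1)"
    and "g (u + 1) (v + 1) - g (u + 1) v = - (k (u + 1) v - k u v)"
    and "g u (v + 1) - g u v = - (k u v - k (u - 1) v)"
    and "g (u + 1) (v + 1) - g u (v + 1) = k u (v + 1) - k u v"
    using assms unfolding complex_conjugate_def by (metis add_diff_cancel_right')+
  then show "k (u + 1) v + k (u - 1) v + k u (v + 1) + k u (v - 1) = 4 * k u v"
    by linarith
qed

definition closed_form :: "(int \<Rightarrow> int \<Rightarrow> real) \<Rightarrow> (int \<Rightarrow> int \<Rightarrow> real) \<Rightarrow> bool" where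
  "closed_form A B \<longleftrightarrow> (\<forall>u v. A u v + B (u + 1) v = B u v + A u (v + 1))"

lemma det2_form_closed:
  assumes "discrete_harmonic h1" and "discrete_harmonic h2"
  shows "closed_form
           (\<lambda>u v. - det2 (h1 u (v - 1), h2 u (v - 1)) (h1 u v, h2 u v))
           (\<lambda>u v. det2 (h1 (u - 1) v, h2 (u - 1) v) (h1 u v, h2 u v))"
  unfolding closed_form_def
proof (intro allI)
  fix u v
  have "h1 (u + 1) v + h1 (u - 1) v + h1 u (v + 1) + h1 u (v - 1) = 4 * h1 u v"
    and "h2 (u + 1) v + h2 (u - 1) v + h2 u (v + 1) + h2 u (v - 1) = 4 * h2 u v"
    using assms unfolding discrete_harmonic_def by blast+
  then have e1: "h1 u (v + 1) = 4 * h1 u v - h1 (u - 1) v - h1 (u + 1) v - h1 u (v - 1)"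
    and e2: "h2 u (v + 1) = 4 * h2 u v - h2 (u - 1) v - h2 (u + 1) v - h2 u (v - 1)"
    by linarith+
  show "- det2 (h1 u (v - 1), h2 u (v - 1)) (h1 u v, h2 u v)
          + det2 (h1 (u + 1 - 1) v, h2 (u + 1 - 1) v) (h1 (u + 1) v, h2 (u + 1) v)
        = det2 (h1 (u - 1) v, h2 (u - 1) v) (h1 u v, h2 u v)
          + - det2 (h1 u (v + 1 - 1), h2 u (v + 1 - 1)) (h1 u (v + 1), h2 u (v + 1))"
    unfolding det2_def by (simp only: add_diff_cancel_right' fst_conv snd_conv e1 e2)
      (simp add: algebra_simps)
qed

lemma ex_int_antidifference:
  fixes d :: "int \<Rightarrow> real"
  shows "\<exists>S. S 0 = 0 \<and> (\<forall>n. S (n + 1) - S n = d n)"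
proof -
  define S where "S n = sum d {0..<n} - sum d {n..<0}" for n
  have "S (n + 1) - S n = d n" for n
  proof (cases "n \<ge> 0")
    case True
    then have "{0..<n + 1} = insert n {0..<n}" by auto
    with True show ?thesis by (simp add: S_def)
  next
    case False
    then have "{n..<0} = insert n {n + 1..<0}" by auto
    with False show ?thesis by (simp add: S_def)
  qed
  moreover have "S 0 = 0" by (simp add: S_def)
  ultimately show ?thesis by blast
qed

lemma closed_form_exact:
  assumes "closed_form A B"
  shows "\<exists>F. \<forall>u v. F (u + 1) v - F u v = A u v \<and> F u (v + 1) - F u v = B u v"
proof -
  obtain S where S: "\<And>u. S (u + 1) - S u = A u 0"
    using ex_int_antidifference[of "\<lambda>u. A u 0"] by blast
  obtain T where T0: "\<And>u. T u 0 = 0" and T: "\<And>u v. T u (v + 1) - T u v = B u v"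
    using ex_int_antidifference[of "B _"] by metis
  have T_step: "T (u + 1) v - T u v = A u v - A u 0" for u v
  proof (induction v rule: int_induct[where k = 0])
    case base
    then show ?case using T0 by simp
  next
    case (step1 i)
    have "A u i + B (u + 1) i = B u i + A u (i + 1)"
      using assms unfolding closed_form_def by blast
    with step1 show ?case using T[of "u + 1" i] T[of u i] by linarith
  next
    case (step2 i)
    have "A u (i - 1) + B (u + 1) (i - 1) = B u (i - 1) + A u i"
      using assms unfolding closed_form_def by (metis diff_add_cancel)
    with step2 show ?case using T[of "u + 1" "i - 1"] T[of u "i - 1"] by simp
  qed
  have "(S (u + 1) + T (u + 1) v) - (S u + T u v) = A u v
        \<and> (S u + T u (v + 1)) - (S u + T u v) = B u v" for u v
    using S[of u] T_step[of u v] T[of u v] by linarith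
  then show ?thesis by (intro exI[of _ "\<lambda>u v. S u + T u v"]) simp
qed

theorem mainTheorem10:
  fixes x y :: "int \<Rightarrow> real" and X Y h1 h2 :: "int \<Rightarrow> int \<Rightarrow> real"
  assumes "discrete_analytic_extension x X h1"
      and "discrete_analytic_extension y Y h2"
  shows "\<exists>F :: int \<Rightarrow> int \<Rightarrow> real. \<forall>u v.
           F (u + 1) v - F u v = - det2 (h1 u (v - 1), h2 u (v - 1)) (h1 u v, h2 u v)
         \<and> F u (v + 1) - F u v = det2 (h1 (u - 1) v, h2 (u - 1) v) (h1 u v, h2 u v)"
proof -
  have "complex_conjugate X h1" and "complex_conjugate Y h2"
    using assms unfolding discrete_analytic_extension_def by auto
  then have "discrete_harmonic h1" and "discrete_harmonic h2"
    by (auto intro: complex_conjugate_imp_discrete_harmonic)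
  then show ?thesis by (intro closed_form_exact det2_form_closed)
qed

end
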